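(* Let $p>1$ and $q\ge p+1$, and let $f_{p,q}(t)=\sum_{j=1}^\infty j^{-p}\exp(i t j^q)$ for $t\in\mathbb{R}$. Then $f_{p,q}$, $\operatorname{Re}f_{p,q}$ and $\operatorname{Im}f_{p,q}$ are continuous on $\mathbb{R}$ but differentiable at no point. If moreover $q>p+1$, then none of them is Lipschitz continuous at any point of $\mathbb{R}$.
   Context: A function $g\colon\mathbb{R}\to\mathbb{C}$ is Lipschitz continuous at $t_0$ if there exist constants $L>0$, $\eta>0$ such that $|g(t)-g(t_0)|\le L|t-t_0|$ for all $t\in\,]t_0-\eta,t_0+\eta[$. *)

theory Defs
  imports "HOL-Analysis.Analysis"
begin

text \<open>f_{p,q}(t) = sum over j \<ge> 1 of j^(-p) exp(i t j^q); the index j = Suc k ranges over k :: nat.\<close>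
definition fpq :: "real \<Rightarrow> real \<Rightarrow> real \<Rightarrow> complex" where
  "fpq p q t = (\<Sum>k. complex_of_real (real (Suc k) powr (- p))
                      * exp (\<i> * complex_of_real (t * real (Suc k) powr q)))"

definition lipschitz_at :: "(real \<Rightarrow> 'a::real_normed_vector) \<Rightarrow> real \<Rightarrow> bool" where
  "lipschitz_at g t0 \<longleftrightarrow> (\<exists>L>0. \<exists>\<eta>>0. \<forall>t. t0 - \<eta> < t \<and> t < t0 + \<eta> \<longrightarrow>
       norm (g t - g t0) \<le> L * \<bar>t - t0\<bar>)"

end

theory Submission
  imports Defs
begin

text \<open>Let g = Re (\<omega> * f) with norm \<omega> = 1 and a_n = (n+1) powr (-p). If g had derivative D
  at t0 (or were Lipschitz there, with D = 0), the remainder H s = g (t0 + s) - g t0 - D * sin s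
  would be small near 0. Multiplying H by cis (- (n+1) powr q * s) turns it into a sum of
  absolutely convergent trigonometric series in which the n-th term of f has frequency 0.
  Averaging m times over windows of width h_n \<approx> n powr (1 - q) multiplies a term of frequency
  \<mu> by ((cis (\<mu> h_n) - 1) / (\<i> \<mu> h_n)) ^ m: this fixes frequency 0 and, since the
  frequencies are about n powr (q - 1) apart, damps all the others. Hence a_n is at most four
  times the supremum of H on [0, m h_n]. A derivative makes that supremum o(h_n) \<subseteq> o(a_n)
  because q \<ge> p + 1; a Lipschitz bound makes it O(h_n) \<subseteq> o(a_n) when q > p + 1.
  Since Im f = Re (- \<i> * f), both parts are covered, and f inherits both failures from Re f.\<close>

section \<open>Averaging trigonometric series\<close>

definition trig_series :: "(nat \<Rightarrow> complex) \<Rightarrow> (nat \<Rightarrow> real) \<Rightarrow> real \<Rightarrow> complex" where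
  "trig_series c \<mu> x = (\<Sum>k. c k * cis (\<mu> k * x))"

definition forward_avg :: "real \<Rightarrow> (real \<Rightarrow> complex) \<Rightarrow> real \<Rightarrow> complex" where
  "forward_avg h F x = integral {x..x + h} F / complex_of_real h"

definition avg_factor :: "real \<Rightarrow> complex" where
  "avg_factor y = (if y = 0 then 1 else (cis y - 1) / (\<i> * complex_of_real y))"

definition avg_coeffs :: "real \<Rightarrow> nat \<Rightarrow> (nat \<Rightarrow> complex) \<Rightarrow> (nat \<Rightarrow> real) \<Rightarrow> nat \<Rightarrow> complex" where
  "avg_coeffs h m c \<mu> k = c k * avg_factor (\<mu> k * h) ^ m"

lemma has_integral_cis:
  assumes "h > 0"
  shows "((\<lambda>u. cis (\<mu> * u)) has_integral complex_of_real h * avg_factor (\<mu> * h) * cis (\<mu> * x)) {x..x + h}"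
proof (cases "\<mu> = 0")
  case True
  then show ?thesis
    using assms has_integral_const_real[of "1::complex" x "x + h"] by (simp add: avg_factor_def scaleR_conv_of_real)
next
  case False
  have "((\<lambda>u. cis (\<mu> * u) / (\<i> * complex_of_real \<mu>)) has_vector_derivative cis (\<mu> * u)) (at u within {x..x + h})" for u
  proof -
    have "((\<lambda>z. exp (\<i> * (complex_of_real \<mu> * z)) / (\<i> * complex_of_real \<mu>)) has_field_derivative
        exp (\<i> * (complex_of_real \<mu> * complex_of_real u))) (at (complex_of_real u))"
      using False by (auto intro!: derivative_eq_intros simp: field_simps)
    from has_vector_derivative_real_field[OF this, of "{x..x + h}"] show ?thesis
      by (simp add: cis_conv_exp mult.commute)
  qed
  then have "((\<lambda>u. cis (\<mu> * u)) has_integral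
      cis (\<mu> * (x + h)) / (\<i> * complex_of_real \<mu>) - cis (\<mu> * x) / (\<i> * complex_of_real \<mu>)) {x..x + h}"
    using assms by (intro fundamental_theorem_of_calculus) auto
  moreover have "cis (\<mu> * (x + h)) / (\<i> * complex_of_real \<mu>) - cis (\<mu> * x) / (\<i> * complex_of_real \<mu>)
      = complex_of_real h * avg_factor (\<mu> * h) * cis (\<mu> * x)"
    using False assms by (simp add: avg_factor_def field_simps distrib_left cis_mult[symmetric])
  ultimately show ?thesis by simp
qed

lemma norm_avg_factor_le_1: "norm (avg_factor y) \<le> 1"
proof -
  have "((\<lambda>u. cis (y * u)) has_integral avg_factor y) (cbox 0 1)"
    using has_integral_cis[of 1 y 0] by simp
  from has_integral_bound[OF _ this, of 1] show ?thesis by simp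
qed

lemma norm_avg_factor_le:
  assumes "y \<noteq> 0"
  shows "norm (avg_factor y) \<le> 2 / \<bar>y\<bar>"
proof -
  have "norm (cis y - 1) \<le> 2"
    using norm_triangle_ineq4[of "cis y" 1] by simp
  then show ?thesis using assms
    by (simp add: avg_factor_def norm_divide norm_mult divide_right_mono)
qed

lemma summable_norm_avg_coeffs:
  "summable (\<lambda>k. norm (c k)) \<Longrightarrow> summable (\<lambda>k. norm (avg_coeffs h m c \<mu> k))"
  unfolding avg_coeffs_def
  by (erule summable_comparison_test[rotated])
     (auto simp: norm_mult norm_power intro!: mult_left_le power_le_one norm_avg_factor_le_1)

lemma avg_coeffs_avg_coeffs [simp]:
  "avg_coeffs h j (avg_coeffs h m c \<mu>) \<mu> = avg_coeffs h (j + m) c \<mu>"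
  by (simp add: avg_coeffs_def fun_eq_iff power_add mult_ac)

lemma uniform_limit_trig_series:
  assumes "summable (\<lambda>k. norm (c k))"
  shows "uniform_limit S (\<lambda>N x. \<Sum>k<N. c k * cis (\<mu> k * x)) (trig_series c \<mu>) sequentially"
  unfolding trig_series_def[abs_def] by (rule Weierstrass_m_test[OF _ assms]) (simp add: norm_mult)

lemma continuous_on_trig_series:
  assumes "summable (\<lambda>k. norm (c k))"
  shows "continuous_on S (trig_series c \<mu>)"
  by (rule uniform_limit_theorem[OF _ uniform_limit_trig_series[OF assms]])
     (auto intro!: always_eventually continuous_intros)

lemma sums_trig_series:
  assumes "summable (\<lambda>k. norm (c k))"
  shows "(\<lambda>k. c k * cis (\<mu> k * x)) sums trig_series c \<mu> x"
proof -
  have "summable (\<lambda>k. c k * cis (\<mu> k * x))"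
    by (rule summable_norm_cancel) (use assms in \<open>simp add: norm_mult\<close>)
  then show ?thesis unfolding trig_series_def by (rule summable_sums)
qed

lemma forward_avg_trig_series:
  assumes "summable (\<lambda>k. norm (c k))" "h > 0"
  shows "forward_avg h (trig_series c \<mu>) x = trig_series (avg_coeffs h 1 c \<mu>) \<mu> x"
proof -
  obtain I J where I: "\<And>N. ((\<lambda>u. \<Sum>k<N. c k * cis (\<mu> k * u)) has_integral I N) {x..x + h}"
    and J: "(trig_series c \<mu> has_integral J) {x..x + h}" and IJ: "I \<longlonglongrightarrow> J"
    by (rule uniform_limit_integral[OF uniform_limit_trig_series[OF assms(1), where S="{x..x + h}" and \<mu>=\<mu>]])
       (auto intro!: continuous_intros)
  have "((\<lambda>u. \<Sum>k<N. c k * cis (\<mu> k * u)) has_integral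
      (\<Sum>k<N. c k * (complex_of_real h * avg_factor (\<mu> k * h) * cis (\<mu> k * x)))) {x..x + h}" for N
    by (intro has_integral_sum has_integral_mult_right has_integral_cis assms) auto
  then have "I N = complex_of_real h * (\<Sum>k<N. avg_coeffs h 1 c \<mu> k * cis (\<mu> k * x))" for N
    using has_integral_unique[OF I] by (simp add: sum_distrib_left avg_coeffs_def mult_ac)
  then have "I = (\<lambda>N. complex_of_real h * (\<Sum>k<N. avg_coeffs h 1 c \<mu> k * cis (\<mu> k * x)))"
    by (intro ext)
  moreover have "(\<lambda>k. avg_coeffs h 1 c \<mu> k * cis (\<mu> k * x)) sums trig_series (avg_coeffs h 1 c \<mu>) \<mu> x"
    by (intro sums_trig_series summable_norm_avg_coeffs assms)
  ultimately have "I \<longlonglongrightarrow> complex_of_real h * trig_series (avg_coeffs h 1 c \<mu>) \<mu> x"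
    unfolding sums_def by (simp only: tendsto_mult_left)
  with IJ have "J = complex_of_real h * trig_series (avg_coeffs h 1 c \<mu>) \<mu> x"
    using LIMSEQ_unique by blast
  then show ?thesis using J assms(2) by (simp add: forward_avg_def integral_unique)
qed

lemma forward_avg_sum:
  assumes "finite I" "\<And>i. i \<in> I \<Longrightarrow> continuous_on UNIV (F i)"
  shows "forward_avg h (\<lambda>x. \<Sum>i\<in>I. F i x) x = (\<Sum>i\<in>I. forward_avg h (F i) x)"
proof -
  have "F i integrable_on {x..x + h}" if "i \<in> I" for i
    using continuous_on_subset[OF assms(2)[OF that]] by (auto intro!: integrable_continuous_interval)
  then show ?thesis
    using assms(1) by (simp add: forward_avg_def integral_sum sum_divide_distrib)
qed

lemma iterated_forward_avg_trig_series:
  assumes "finite I" "\<And>i. i \<in> I \<Longrightarrow> summable (\<lambda>k. norm (c i k))" "h > 0"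
  shows "(forward_avg h ^^ m) (\<lambda>x. \<Sum>i\<in>I. trig_series (c i) (\<mu> i) x)
       = (\<lambda>x. \<Sum>i\<in>I. trig_series (avg_coeffs h m (c i) (\<mu> i)) (\<mu> i) x)"
proof (induction m)
  case 0
  then show ?case by (simp add: avg_coeffs_def)
next
  case (Suc m)
  have "continuous_on UNIV (trig_series (avg_coeffs h m (c i) (\<mu> i)) (\<mu> i))" if "i \<in> I" for i
    using assms(2)[OF that] by (intro continuous_on_trig_series summable_norm_avg_coeffs)
  then show ?case
    using assms by (auto simp: Suc.IH forward_avg_sum[OF assms(1)] forward_avg_trig_series
        summable_norm_avg_coeffs intro!: ext sum.cong)
qed

lemma norm_forward_avg_le:
  assumes "continuous_on {x..x + h} F" "h > 0" "\<And>u. u \<in> {x..x + h} \<Longrightarrow> norm (F u) \<le> B"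
  shows "norm (forward_avg h F x) \<le> B"
proof -
  have "norm (integral {x..x + h} F) \<le> integral {x..x + h} (\<lambda>_. B)"
    using assms by (intro integral_norm_bound_integral integrable_continuous_interval) auto
  then show ?thesis
    using assms(2) by (simp add: forward_avg_def norm_divide divide_le_eq mult.commute)
qed

lemma norm_iterated_forward_avg_trig_series_le:
  assumes "finite I" "\<And>i. i \<in> I \<Longrightarrow> summable (\<lambda>k. norm (c i k))" "h > 0"
    and "\<And>u. u \<in> {x..x + real m * h} \<Longrightarrow> norm (\<Sum>i\<in>I. trig_series (c i) (\<mu> i) u) \<le> B"
  shows "norm ((forward_avg h ^^ m) (\<lambda>x. \<Sum>i\<in>I. trig_series (c i) (\<mu> i) x) x) \<le> B"
  using assms(4)
proof (induction m arbitrary: x)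
  case 0
  then show ?case by simp
next
  case (Suc m)
  let ?F = "(forward_avg h ^^ m) (\<lambda>x. \<Sum>i\<in>I. trig_series (c i) (\<mu> i) x)"
  have "?F = (\<lambda>x. \<Sum>i\<in>I. trig_series (avg_coeffs h m (c i) (\<mu> i)) (\<mu> i) x)"
    by (rule iterated_forward_avg_trig_series[OF assms(1-3)])
  then have "continuous_on {x..x + h} ?F"
    using assms(1,2) by (auto intro!: continuous_on_sum continuous_on_trig_series summable_norm_avg_coeffs)
  moreover have "norm (?F u) \<le> B" if "u \<in> {x..x + h}" for u
    using that assms(3) by (intro Suc.IH Suc.prems) (auto simp: algebra_simps)
  ultimately show ?case using norm_forward_avg_le[OF _ assms(3), of x ?F B] by simp
qed

lemma sums_remove_term:
  fixes f :: "nat \<Rightarrow> 'a::real_normed_vector"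
  assumes "f sums s"
  shows "(\<lambda>k. if k = n then 0 else f k) sums (s - f n)"
proof -
  have "(\<lambda>k. f k - (if k = n then f k else 0)) sums (s - f n)"
    by (intro sums_diff assms sums_single)
  then show ?thesis by (simp add: if_distrib cong: if_cong)
qed

text \<open>Averaging m times fixes the terms of frequency 0 and multiplies every other term by
  avg_factor (\<mu> * h) ^ m; evaluating at 0 then isolates the coefficient c i0 n.\<close>
lemma norm_zero_freq_coeff_le:
  assumes "finite I" "i0 \<in> I" "\<And>i. i \<in> I \<Longrightarrow> summable (\<lambda>k. norm (c i k))" "h > 0" "\<mu> i0 n = 0"
    and "\<And>u. u \<in> {0..real m * h} \<Longrightarrow> norm (\<Sum>i\<in>I. trig_series (c i) (\<mu> i) u) \<le> B"
  shows "norm (c i0 n) \<le> B + (\<Sum>i\<in>I. \<Sum>k. if i = i0 \<and> k = n then 0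
                                     else norm (c i k) * norm (avg_factor (\<mu> i k * h)) ^ m)"
proof -
  define d where "d i = avg_coeffs h m (c i) (\<mu> i)" for i
  define r where "r i k = (if i = i0 \<and> k = n then 0 else d i k)" for i k
  have sd: "summable (\<lambda>k. norm (d i k))" if "i \<in> I" for i
    unfolding d_def using assms(3)[OF that] by (rule summable_norm_avg_coeffs)
  have "norm ((forward_avg h ^^ m) (\<lambda>x. \<Sum>i\<in>I. trig_series (c i) (\<mu> i) x) 0) \<le> B"
    by (rule norm_iterated_forward_avg_trig_series_le[OF assms(1,3,4)]) (use assms(6) in auto)
  then have V: "norm (\<Sum>i\<in>I. trig_series (d i) (\<mu> i) 0) \<le> B"
    by (simp add: iterated_forward_avg_trig_series[OF assms(1,3,4)] d_def)
  have r_sums: "r i sums (trig_series (d i) (\<mu> i) 0 - (if i = i0 then c i0 n else 0))" if "i \<in> I" for i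
  proof -
    have "d i sums trig_series (d i) (\<mu> i) 0"
      using sums_trig_series[OF sd[OF that], of "\<mu> i" 0] by simp
    moreover have "d i0 n = c i0 n"
      using assms(5) by (simp add: d_def avg_coeffs_def avg_factor_def)
    moreover have "r i = (if i = i0 then (\<lambda>k. if k = n then 0 else d i k) else d i)"
      by (auto simp: r_def fun_eq_iff)
    ultimately show ?thesis
      using sums_remove_term[of "d i" _ n] by auto
  qed
  have "(\<Sum>i\<in>I. trig_series (d i) (\<mu> i) 0) = c i0 n + (\<Sum>i\<in>I. suminf (r i))"
    using assms(1,2) by (simp add: sums_unique[OF r_sums, symmetric] sum_subtractf)
  then have "norm (c i0 n) \<le> norm (\<Sum>i\<in>I. trig_series (d i) (\<mu> i) 0) + norm (\<Sum>i\<in>I. suminf (r i))"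
    by (metis add_diff_cancel_right' norm_triangle_ineq4)
  also have "\<dots> \<le> norm (\<Sum>i\<in>I. trig_series (d i) (\<mu> i) 0) + (\<Sum>i\<in>I. norm (suminf (r i)))"
    by (rule add_left_mono) (rule norm_sum)
  also have "\<dots> \<le> B + (\<Sum>i\<in>I. \<Sum>k. norm (r i k))"
  proof (intro add_mono V sum_mono summable_norm)
    fix i assume "i \<in> I"
    show "summable (\<lambda>k. norm (r i k))"
      by (rule summable_comparison_test[OF _ sd[OF \<open>i \<in> I\<close>]]) (simp add: r_def)
  qed
  finally show ?thesis
    by (simp add: r_def d_def avg_coeffs_def norm_mult norm_power if_distrib cong: if_cong)
qed

lemma norm_zero_freq_coeff_le_three:
  assumes "summable (\<lambda>k. norm (c\<^sub>0 k))" "summable (\<lambda>k. norm (c\<^sub>1 k))" "summable (\<lambda>k. norm (c\<^sub>2 k))"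
    and "h > 0" "\<mu>\<^sub>0 n = 0"
    and "\<And>u. u \<in> {0..real m * h} \<Longrightarrow>
      norm (trig_series c\<^sub>0 \<mu>\<^sub>0 u + trig_series c\<^sub>1 \<mu>\<^sub>1 u + trig_series c\<^sub>2 \<mu>\<^sub>2 u) \<le> B"
  shows "norm (c\<^sub>0 n) \<le> B
    + (\<Sum>k. if k = n then 0 else norm (c\<^sub>0 k) * norm (avg_factor (\<mu>\<^sub>0 k * h)) ^ m)
    + (\<Sum>k. norm (c\<^sub>1 k) * norm (avg_factor (\<mu>\<^sub>1 k * h)) ^ m)
    + (\<Sum>k. norm (c\<^sub>2 k) * norm (avg_factor (\<mu>\<^sub>2 k * h)) ^ m)"
proof -
  define c where "c i = (case i of 0 \<Rightarrow> c\<^sub>0 | Suc 0 \<Rightarrow> c\<^sub>1 | _ \<Rightarrow> c\<^sub>2)" for i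
  define \<mu> where "\<mu> i = (case i of 0 \<Rightarrow> \<mu>\<^sub>0 | Suc 0 \<Rightarrow> \<mu>\<^sub>1 | _ \<Rightarrow> \<mu>\<^sub>2)" for i
  have "norm (c 0 n) \<le> B + (\<Sum>i<3. \<Sum>k. if i = 0 \<and> k = n then 0
                                    else norm (c i k) * norm (avg_factor (\<mu> i k * h)) ^ m)"
    by (rule norm_zero_freq_coeff_le)
       (use assms in \<open>auto simp: c_def \<mu>_def numeral_3_eq_3 less_Suc_eq add_ac\<close>)
  then show ?thesis
    by (simp add: c_def \<mu>_def numeral_3_eq_3 add_ac cong: if_cong)
qed

lemma powr_diff_ge:
  fixes x y q :: real
  assumes "x > 0" "y > 0" "q \<ge> 1"
  shows "\<bar>x powr q - y powr q\<bar> \<ge> \<bar>x - y\<bar> * y powr (q - 1)"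
proof -
  have split: "z powr q = z * z powr (q - 1)" if "z > 0" for z :: real
    using that powr_add[of z 1 "q - 1"] by simp
  show ?thesis
  proof (cases "x \<ge> y")
    case True
    then have "x * x powr (q - 1) \<ge> x * y powr (q - 1)"
      using assms by (intro mult_left_mono powr_mono2) auto
    then show ?thesis using True split[OF assms(1)] split[OF assms(2)] by (simp add: algebra_simps)
  next
    case False
    then have "x * x powr (q - 1) \<le> x * y powr (q - 1)"
      using assms by (intro mult_left_mono powr_mono2) auto
    then show ?thesis using False split[OF assms(1)] split[OF assms(2)] by (simp add: algebra_simps)
  qed
qed

lemma Suc_times_dist_ge:
  assumes "k \<noteq> n"
  shows "real (Suc n) / 2 \<le> real (Suc k) * \<bar>real k - real n\<bar>"
proof -
  have "\<bar>real k - real n\<bar> \<ge> 1" using assms by linarith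
  then have ge_Suc: "real (Suc k) \<le> real (Suc k) * \<bar>real k - real n\<bar>"
    by (metis mult_left_mono mult.right_neutral of_nat_0_le_iff)
  show ?thesis
  proof (cases "real (Suc n) \<le> 2 * real (Suc k)")
    case True
    then have "real (Suc n) / 2 \<le> real (Suc k)" by simp
    with ge_Suc show ?thesis by linarith
  next
    case False
    then have "real (Suc n) / 2 \<le> \<bar>real k - real n\<bar>" by simp
    also have "\<dots> \<le> real (Suc k) * \<bar>real k - real n\<bar>" by (simp add: mult_le_cancel_right1)
    finally show ?thesis .
  qed
qed

lemma norm_avg_factor_power_le:
  assumes "x \<ge> 1" "c \<ge> 2" "\<bar>y\<bar> \<ge> c * x" "m \<ge> 1" "r \<le> real m"
  shows "norm (avg_factor y) ^ m \<le> 2 / c * x powr (- r)"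
proof -
  have "c * x > 0" using assms by simp
  then have "\<bar>y\<bar> > 0" using assms(3) by linarith
  then have "norm (avg_factor y) \<le> 2 / \<bar>y\<bar>"
    by (intro norm_avg_factor_le) auto
  also have "\<dots> \<le> 2 / c * (1 / x)"
    using assms by (simp add: frac_le)
  finally have "norm (avg_factor y) ^ m \<le> (2 / c) ^ m * (1 / x) ^ m"
    by (simp add: power_mono power_mult_distrib[symmetric])
  moreover have "(2 / c) ^ m \<le> 2 / c"
    using assms power_decreasing[of 1 m "2 / c"] by simp
  moreover have "(1 / x) ^ m \<le> x powr (- r)"
  proof -
    have "(1 / x) ^ m = x powr (- real m)"
      using assms by (simp add: powr_minus powr_realpow power_one_over inverse_eq_divide)
    also have "\<dots> \<le> x powr (- r)"
      using assms by (intro powr_mono) auto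
    finally show ?thesis .
  qed
  ultimately show ?thesis
    using assms by (smt (verit) mult_mono divide_nonneg_nonneg zero_le_power)
qed

section \<open>Coefficients, frequencies and averaging windows of f_{p,q}\<close>

definition fpq_coeff :: "real \<Rightarrow> nat \<Rightarrow> real" where
  "fpq_coeff p k = real (Suc k) powr (- p)"

definition fpq_freq :: "real \<Rightarrow> nat \<Rightarrow> real" where
  "fpq_freq q k = real (Suc k) powr q"

definition coeff_sum :: "real \<Rightarrow> real" where
  "coeff_sum p = (\<Sum>k. fpq_coeff p k)"

text \<open>These choices make the tails in near_tail_le and far_tail_le at most a_n / 32 and a_n / 16;
  avg_count p \<ge> p + 2 lets the damping (2 / (M * \<bar>k - n\<bar>)) ^ m absorb the growth
  a_k / a_n \<le> (2 * \<bar>k - n\<bar>) powr p of the coefficients near n.\<close>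
definition avg_const :: "real \<Rightarrow> real" where
  "avg_const p = 2 powr (p + 6) * coeff_sum 2 + 16 * coeff_sum p + 4"

definition avg_count :: "real \<Rightarrow> nat" where
  "avg_count p = nat \<lceil>p\<rceil> + 2"

text \<open>Consecutive frequencies near fpq_freq q n are about n^(q-1) apart, so averaging over
  windows of this width damps every frequency except the n-th.\<close>
definition avg_width :: "real \<Rightarrow> real \<Rightarrow> nat \<Rightarrow> real" where
  "avg_width p q n = avg_const p * real (Suc n) powr (1 - q)"

lemma fpq_coeff_pos: "fpq_coeff p k > 0"
  by (simp add: fpq_coeff_def)

lemma summable_fpq_coeff: "p > 1 \<Longrightarrow> summable (fpq_coeff p)"
  unfolding fpq_coeff_def
  using summable_iff_shift[of "\<lambda>n. real n powr (- p)" 1] by (simp add: summable_real_powr_iff)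

lemma coeff_sum_nonneg: "p > 1 \<Longrightarrow> coeff_sum p \<ge> 0"
  unfolding coeff_sum_def by (intro suminf_nonneg summable_fpq_coeff less_imp_le[OF fpq_coeff_pos])

lemma avg_const_ge_4: "p > 1 \<Longrightarrow> avg_const p \<ge> 4"
  using coeff_sum_nonneg[of 2] coeff_sum_nonneg[of p] unfolding avg_const_def by simp

lemma avg_count_ge: "p > 0 \<Longrightarrow> real (avg_count p) \<ge> p + 2"
  unfolding avg_count_def by linarith

lemma avg_count_pos: "avg_count p \<ge> 1"
  unfolding avg_count_def by simp

lemma avg_width_pos: "p > 1 \<Longrightarrow> avg_width p q n > 0"
  using avg_const_ge_4[of p] unfolding avg_width_def by simp

lemma fpq_freq_times_avg_width:
  "fpq_freq q n * avg_width p q n = avg_const p * real (Suc n)"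
  by (simp add: fpq_freq_def avg_width_def powr_add[symmetric] mult_ac)

lemma half_fpq_coeff_damped_le: "fpq_coeff p k / 2 * norm (avg_factor y) ^ m \<le> fpq_coeff p k"
proof -
  have "norm (avg_factor y) ^ m \<le> 1"
    by (intro power_le_one norm_avg_factor_le_1 norm_ge_zero)
  then show ?thesis
    using fpq_coeff_pos[of p k] mult_left_le[of "norm (avg_factor y) ^ m" "fpq_coeff p k / 2"] by simp
qed

lemma summable_half_fpq_coeff_damped:
  "p > 1 \<Longrightarrow> summable (\<lambda>k. fpq_coeff p k / 2 * norm (avg_factor (y k)) ^ m)"
  by (rule summable_comparison_test[OF _ summable_fpq_coeff])
     (use half_fpq_coeff_damped_le in \<open>auto intro!: exI[of _ 0]
       simp: abs_mult abs_of_pos[OF fpq_coeff_pos] less_imp_le[OF fpq_coeff_pos]\<close>)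

lemma inverse_square_dist:
  "summable (\<lambda>k. if k = n then 0 else \<bar>real k - real n\<bar> powr (-2))"
  "(\<Sum>k. if k = n then 0 else \<bar>real k - real n\<bar> powr (-2)) \<le> 2 * coeff_sum 2"
proof -
  define f where "f = (\<lambda>k. if k = n then 0 else \<bar>real k - real n\<bar> powr (-2))"
  have shift: "(\<lambda>k. f (k + Suc n)) = fpq_coeff 2"
    by (rule ext) (simp add: f_def fpq_coeff_def)
  have "summable (fpq_coeff 2)" by (rule summable_fpq_coeff) simp
  then have "summable (\<lambda>k. f (k + Suc n))" by (simp only: shift)
  then show summable_f: "summable f" by (simp only: summable_iff_shift)
  show "suminf f \<le> 2 * coeff_sum 2"
  proof -
    have "(\<Sum>i<Suc n. f i) = (\<Sum>i<n. f i)"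
      by (simp add: f_def)
    also have "\<dots> = (\<Sum>i<n. f (n - Suc i))"
      by (rule sum.nat_diff_reindex[symmetric])
    also have "\<dots> = (\<Sum>i<n. fpq_coeff 2 i)"
      by (rule sum.cong) (auto simp: f_def fpq_coeff_def of_nat_diff add.commute)
    also have "\<dots> \<le> coeff_sum 2"
      unfolding coeff_sum_def
      by (intro sum_le_suminf summable_fpq_coeff less_imp_le[OF fpq_coeff_pos]) auto
    finally have "(\<Sum>i<Suc n. f i) \<le> coeff_sum 2" .
    moreover have "suminf f = coeff_sum 2 + (\<Sum>i<Suc n. f i)"
      using suminf_split_initial_segment[OF summable_f, of "Suc n"]
      by (simp only: shift coeff_sum_def)
    ultimately show ?thesis by simp
  qed
qed

context
  fixes p q :: real
  assumes p: "p > 1" and q: "q \<ge> p + 1"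
begin

lemma fpq_freq_gap:
  "\<bar>real k - real n\<bar> * avg_const p \<le> \<bar>(fpq_freq q k - fpq_freq q n) * avg_width p q n\<bar>"
proof -
  have "\<bar>real k - real n\<bar> * real (Suc n) powr (q - 1) \<le> \<bar>fpq_freq q k - fpq_freq q n\<bar>"
    using powr_diff_ge[of "real (Suc k)" "real (Suc n)" q] p q by (simp add: fpq_freq_def)
  then have "\<bar>real k - real n\<bar> * (real (Suc n) powr (q - 1) * avg_width p q n)
      \<le> \<bar>fpq_freq q k - fpq_freq q n\<bar> * avg_width p q n"
    using avg_width_pos[OF p] by (simp add: mult.assoc[symmetric] mult_right_mono)
  also have "real (Suc n) powr (q - 1) * avg_width p q n = avg_const p"
    by (simp add: avg_width_def powr_add[symmetric] mult_ac)
  finally show ?thesis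
    by (simp add: abs_mult abs_of_pos[OF avg_width_pos[OF p]])
qed

lemma near_tail_term_le:
  assumes "k \<noteq> n"
  shows "fpq_coeff p k / 2 * norm (avg_factor ((fpq_freq q k - fpq_freq q n) * avg_width p q n)) ^ avg_count p
    \<le> 2 powr p * fpq_coeff p n / avg_const p * \<bar>real k - real n\<bar> powr (-2)"
proof -
  let ?M = "avg_const p"
  define d where "d = \<bar>real k - real n\<bar>"
  have d: "d \<ge> 1" using assms unfolding d_def by linarith
  have M: "?M \<ge> 4" by (rule avg_const_ge_4[OF p])
  have "norm (avg_factor ((fpq_freq q k - fpq_freq q n) * avg_width p q n)) ^ avg_count p
      \<le> 2 / ?M * d powr (- (p + 2))"
    using fpq_freq_gap[of k n] d M avg_count_ge[of p] avg_count_pos[of p] p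
    by (intro norm_avg_factor_power_le) (auto simp: d_def mult.commute)
  also have "\<dots> = 2 / ?M * d powr (- p) * d powr (-2)"
    using d by (simp add: powr_add[symmetric])
  finally have factor_le: "norm (avg_factor ((fpq_freq q k - fpq_freq q n) * avg_width p q n)) ^ avg_count p
      \<le> 2 / ?M * d powr (- p) * d powr (-2)" .
  have "fpq_coeff p k * d powr (- p) = (real (Suc k) * d) powr (- p)"
    by (simp add: fpq_coeff_def powr_mult)
  also have "\<dots> \<le> (real (Suc n) / 2) powr (- p)"
    using Suc_times_dist_ge[OF assms] p by (intro powr_mono2') (auto simp: d_def)
  also have "\<dots> = 2 powr p * fpq_coeff p n"
    by (simp add: fpq_coeff_def powr_divide powr_minus_divide)
  finally have coeff_le: "fpq_coeff p k * d powr (- p) \<le> 2 powr p * fpq_coeff p n" .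
  have "fpq_coeff p k / 2 * norm (avg_factor ((fpq_freq q k - fpq_freq q n) * avg_width p q n)) ^ avg_count p
      \<le> fpq_coeff p k / 2 * (2 / ?M * d powr (- p) * d powr (-2))"
    using factor_le fpq_coeff_pos[of p k] by (intro mult_left_mono) auto
  also have "\<dots> = 1 / ?M * (fpq_coeff p k * d powr (- p)) * d powr (-2)"
    by (simp add: mult_ac)
  also have "\<dots> \<le> 1 / ?M * (2 powr p * fpq_coeff p n) * d powr (-2)"
    using coeff_le M by (intro mult_right_mono mult_left_mono) auto
  finally show ?thesis by (simp add: d_def)
qed

lemma near_tail_le:
  "(\<Sum>k. if k = n then 0 else fpq_coeff p k / 2
       * norm (avg_factor ((fpq_freq q k - fpq_freq q n) * avg_width p q n)) ^ avg_count p)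
     \<le> fpq_coeff p n / 32"
proof -
  let ?M = "avg_const p"
  define K where "K = 2 powr p * fpq_coeff p n / ?M"
  have M: "?M \<ge> 4" by (rule avg_const_ge_4[OF p])
  have "(\<Sum>k. if k = n then 0 else fpq_coeff p k / 2
       * norm (avg_factor ((fpq_freq q k - fpq_freq q n) * avg_width p q n)) ^ avg_count p)
     \<le> (\<Sum>k. K * (if k = n then 0 else \<bar>real k - real n\<bar> powr (-2)))"
  proof (rule suminf_le)
    show "summable (\<lambda>k. if k = n then 0 else fpq_coeff p k / 2
       * norm (avg_factor ((fpq_freq q k - fpq_freq q n) * avg_width p q n)) ^ avg_count p)"
      by (rule summable_comparison_test[OF _ summable_half_fpq_coeff_damped[OF p,
            of "\<lambda>k. (fpq_freq q k - fpq_freq q n) * avg_width p q n" "avg_count p"]])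
         (auto intro!: exI[of _ 0] simp: less_imp_le[OF fpq_coeff_pos])
  qed (use near_tail_term_le in \<open>auto simp: K_def intro: summable_mult inverse_square_dist(1)\<close>)
  also have "\<dots> = K * (\<Sum>k. if k = n then 0 else \<bar>real k - real n\<bar> powr (-2))"
    by (rule suminf_mult[OF inverse_square_dist(1)])
  also have "\<dots> \<le> K * (2 * coeff_sum 2)"
    using M fpq_coeff_pos[of p n] by (intro mult_left_mono[OF inverse_square_dist(2)]) (simp add: K_def)
  also have "\<dots> \<le> fpq_coeff p n / 32"
  proof -
    have "2 powr p * (2 * coeff_sum 2) * 32 \<le> ?M"
      using coeff_sum_nonneg[OF p] by (simp add: avg_const_def powr_add)
    then have "fpq_coeff p n * (2 powr p * (2 * coeff_sum 2)) / ?M \<le> fpq_coeff p n * (?M / 32) / ?M"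
      using M fpq_coeff_pos[of p n] by (intro divide_right_mono mult_left_mono) auto
    then show ?thesis
      using M by (simp add: K_def mult_ac)
  qed
  finally show ?thesis .
qed

lemma far_freq_factor_le:
  "norm (avg_factor ((- fpq_freq q k - fpq_freq q n) * avg_width p q n)) ^ avg_count p
    \<le> 2 / avg_const p * fpq_coeff p n"
  unfolding fpq_coeff_def
proof (rule norm_avg_factor_power_le)
  have pos: "(fpq_freq q k + fpq_freq q n) * avg_width p q n > 0"
    using avg_width_pos[OF p] by (simp add: fpq_freq_def add_pos_pos)
  have "avg_const p * real (Suc n) = fpq_freq q n * avg_width p q n"
    by (simp add: fpq_freq_times_avg_width)
  also have "\<dots> \<le> (fpq_freq q k + fpq_freq q n) * avg_width p q n"
    using less_imp_le[OF avg_width_pos[OF p]] by (intro mult_right_mono) (auto simp: fpq_freq_def)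
  also have "\<dots> = \<bar>(- fpq_freq q k - fpq_freq q n) * avg_width p q n\<bar>"
    using pos by (simp add: abs_minus_cancel[symmetric, of "(fpq_freq q k + fpq_freq q n) * _"] algebra_simps)
  finally show "avg_const p * real (Suc n) \<le> \<bar>(- fpq_freq q k - fpq_freq q n) * avg_width p q n\<bar>" .
qed (use avg_const_ge_4[OF p] avg_count_ge[of p] avg_count_pos[of p] p in auto)

lemma far_tail_le:
  "(\<Sum>k. fpq_coeff p k / 2
       * norm (avg_factor ((- fpq_freq q k - fpq_freq q n) * avg_width p q n)) ^ avg_count p)
     \<le> fpq_coeff p n / 16"
proof -
  let ?M = "avg_const p"
  have M: "?M \<ge> 4" by (rule avg_const_ge_4[OF p])
  have "(\<Sum>k. fpq_coeff p k / 2
       * norm (avg_factor ((- fpq_freq q k - fpq_freq q n) * avg_width p q n)) ^ avg_count p)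
     \<le> (\<Sum>k. fpq_coeff p k * (fpq_coeff p n / ?M))"
  proof (rule suminf_le)
    show "fpq_coeff p k / 2 * norm (avg_factor ((- fpq_freq q k - fpq_freq q n) * avg_width p q n)) ^ avg_count p
        \<le> fpq_coeff p k * (fpq_coeff p n / ?M)" for k
      using mult_left_mono[OF far_freq_factor_le[of k], of "fpq_coeff p k / 2"] fpq_coeff_pos[of p k] by simp
    show "summable (\<lambda>k. fpq_coeff p k / 2
       * norm (avg_factor ((- fpq_freq q k - fpq_freq q n) * avg_width p q n)) ^ avg_count p)"
      by (rule summable_half_fpq_coeff_damped[OF p])
    show "summable (\<lambda>k. fpq_coeff p k * (fpq_coeff p n / ?M))"
      by (intro summable_mult2 summable_fpq_coeff p)
  qed
  also have "\<dots> = coeff_sum p * (fpq_coeff p n / ?M)"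
    unfolding coeff_sum_def by (rule suminf_mult2[OF summable_fpq_coeff[OF p], symmetric])
  also have "\<dots> \<le> fpq_coeff p n / 16"
  proof -
    have "coeff_sum p * 16 \<le> ?M"
      using coeff_sum_nonneg[of 2] unfolding avg_const_def by simp
    then have "fpq_coeff p n * coeff_sum p / ?M \<le> fpq_coeff p n * (?M / 16) / ?M"
      using M fpq_coeff_pos[of p n] by (intro divide_right_mono mult_left_mono) auto
    then show ?thesis
      using M by (simp add: mult_ac)
  qed
  finally show ?thesis .
qed

lemma low_freq_factor_le:
  assumes "\<bar>\<nu>\<bar> \<ge> fpq_freq q n / 2"
  shows "norm (avg_factor (\<nu> * avg_width p q n)) ^ avg_count p \<le> fpq_coeff p n / real (Suc n)"
proof -
  let ?M = "avg_const p" and ?N = "real (Suc n)"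
  have M: "?M \<ge> 4" by (rule avg_const_ge_4[OF p])
  have "norm (avg_factor (\<nu> * avg_width p q n)) ^ avg_count p \<le> 2 / (?M / 2) * ?N powr (- (p + 1))"
  proof (rule norm_avg_factor_power_le)
    have "fpq_freq q n / 2 * avg_width p q n \<le> \<bar>\<nu>\<bar> * avg_width p q n"
      using assms less_imp_le[OF avg_width_pos[OF p]] by (intro mult_right_mono) auto
    then show "?M / 2 * ?N \<le> \<bar>\<nu> * avg_width p q n\<bar>"
      using fpq_freq_times_avg_width[of q n p] by (simp add: abs_mult abs_of_pos[OF avg_width_pos[OF p]])
  qed (use M avg_count_ge[of p] avg_count_pos[of p] p in auto)
  also have "\<dots> \<le> ?N powr (- (p + 1))"
    using M by (intro mult_left_le_one_le) (auto simp: field_simps)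
  also have "\<dots> = fpq_coeff p n / ?N"
  proof -
    have "?N powr (- p) = ?N powr (- (p + 1)) * ?N"
      using powr_add[of ?N "- (p + 1)" 1] by simp
    then show ?thesis by (simp add: fpq_coeff_def)
  qed
  finally show ?thesis .
qed

lemma low_freq_terms_le:
  assumes "n > 0" and small: "16 * (\<bar>g\<bar> + \<bar>D\<bar>) \<le> real (Suc n)"
  defines "l \<equiv> fpq_freq q n" and "w \<equiv> avg_width p q n" and "m \<equiv> avg_count p"
  shows "\<bar>g\<bar> * norm (avg_factor (- l * w)) ^ m + \<bar>D\<bar> / 2 * norm (avg_factor ((1 - l) * w)) ^ m
      + \<bar>D\<bar> / 2 * norm (avg_factor ((- 1 - l) * w)) ^ m \<le> fpq_coeff p n / 16"
proof -
  have "real (Suc n) powr 1 \<le> real (Suc n) powr q"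
    using p q by (intro powr_mono) auto
  then have "real (Suc n) \<le> l"
    by (simp add: l_def fpq_freq_def)
  then have "\<bar>\<nu>\<bar> \<ge> l / 2" if "\<nu> \<in> {- l, 1 - l, - 1 - l}" for \<nu>
    using that assms(1) by auto
  then have factor_le: "norm (avg_factor (\<nu> * w)) ^ m \<le> fpq_coeff p n / real (Suc n)"
    if "\<nu> \<in> {- l, 1 - l, - 1 - l}" for \<nu>
    using that unfolding l_def w_def m_def by (intro low_freq_factor_le) auto
  have "\<bar>g\<bar> * norm (avg_factor (- l * w)) ^ m + \<bar>D\<bar> / 2 * norm (avg_factor ((1 - l) * w)) ^ m
      + \<bar>D\<bar> / 2 * norm (avg_factor ((- 1 - l) * w)) ^ m
      \<le> \<bar>g\<bar> * (fpq_coeff p n / real (Suc n)) + \<bar>D\<bar> / 2 * (fpq_coeff p n / real (Suc n))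
        + \<bar>D\<bar> / 2 * (fpq_coeff p n / real (Suc n))"
    by (intro add_mono mult_left_mono factor_le) auto
  also have "\<dots> = (\<bar>g\<bar> + \<bar>D\<bar> / 2 + \<bar>D\<bar> / 2) * (fpq_coeff p n / real (Suc n))"
    by (simp only: distrib_right)
  also have "\<dots> = (\<bar>g\<bar> + \<bar>D\<bar>) * fpq_coeff p n / real (Suc n)"
    by simp
  also have "\<dots> \<le> real (Suc n) / 16 * fpq_coeff p n / real (Suc n)"
    using small fpq_coeff_pos[of p n] by (intro divide_right_mono mult_right_mono) auto
  also have "\<dots> = fpq_coeff p n / 16"
    by (simp del: of_nat_Suc)
  finally show ?thesis .
qed

end

section \<open>The remainder after subtracting a derivative\<close>

lemma fpq_eq_trig_series: "fpq p q = trig_series (\<lambda>k. complex_of_real (fpq_coeff p k)) (fpq_freq q)"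
  by (simp add: fun_eq_iff fpq_def trig_series_def fpq_coeff_def fpq_freq_def cis_conv_exp mult.commute)

lemma summable_norm_fpq_coeff: "p > 1 \<Longrightarrow> summable (\<lambda>k. norm (complex_of_real (fpq_coeff p k)))"
  using summable_fpq_coeff[of p] by (simp add: abs_of_pos[OF fpq_coeff_pos])

lemma sin_eq_cis: "complex_of_real (sin s) = (cis s - cis (- s)) / (2 * \<i>)"
  by (simp add: sin_of_real[symmetric] sin_exp_eq cis_conv_exp)

lemma trig_series_half_shift:
  assumes "(\<lambda>k. b k * cis (\<nu> k * s)) sums X"
  shows "trig_series (\<lambda>k. b k / 2) (\<lambda>k. \<nu> k - l) s = X * (cis (- l * s) / 2)"
proof -
  have "b k * cis (\<nu> k * s) * (cis (- l * s) / 2) = b k / 2 * cis ((\<nu> k - l) * s)" for k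
    by (simp add: cis_mult algebra_simps)
  then have "(\<lambda>k. b k / 2 * cis ((\<nu> k - l) * s)) sums (X * (cis (- l * s) / 2))"
    using sums_mult2[OF assms, of "cis (- l * s) / 2"] by (simp only:)
  then show ?thesis
    unfolding trig_series_def by (rule sums_unique[symmetric])
qed

text \<open>Multiplying the remainder by cis (- l * s) shifts all frequencies by - l; with
  l = fpq_freq q n the n-th term of the first series becomes the constant term.\<close>
lemma remainder_times_cis_eq:
  fixes p q t0 D l s :: real and \<omega> :: complex
  assumes "p > 1"
  defines "\<beta> \<equiv> \<lambda>k. \<omega> * complex_of_real (fpq_coeff p k) * cis (fpq_freq q k * t0)"
  shows "complex_of_real (Re (\<omega> * fpq p q (t0 + s)) - Re (\<omega> * fpq p q t0) - D * sin s) * cis (- l * s)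
    = trig_series (\<lambda>k. \<beta> k / 2) (\<lambda>k. fpq_freq q k - l) s
      + trig_series (\<lambda>k. cnj (\<beta> k) / 2) (\<lambda>k. - fpq_freq q k - l) s
      + trig_series (\<lambda>k. case k of 0 \<Rightarrow> - complex_of_real (Re (\<omega> * fpq p q t0))
                         | Suc 0 \<Rightarrow> - complex_of_real D / (2 * \<i>)
                         | Suc (Suc 0) \<Rightarrow> complex_of_real D / (2 * \<i>) | _ \<Rightarrow> 0)
          (\<lambda>k. case k of 0 \<Rightarrow> - l | Suc 0 \<Rightarrow> 1 - l | _ \<Rightarrow> - 1 - l) s"
proof -
  define X where "X = \<omega> * fpq p q (t0 + s)"
  have sums_X: "(\<lambda>k. \<beta> k * cis (fpq_freq q k * s)) sums X"
  proof -
    have "(\<lambda>k. \<omega> * (complex_of_real (fpq_coeff p k) * cis (fpq_freq q k * (t0 + s)))) sums X"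
      unfolding X_def fpq_eq_trig_series
      by (intro sums_mult sums_trig_series summable_norm_fpq_coeff assms)
    then show ?thesis
      by (simp add: \<beta>_def cis_mult algebra_simps)
  qed
  have first: "trig_series (\<lambda>k. \<beta> k / 2) (\<lambda>k. fpq_freq q k - l) s = X * (cis (- l * s) / 2)"
    by (rule trig_series_half_shift[OF sums_X])
  have "(\<lambda>k. cnj (\<beta> k * cis (fpq_freq q k * s))) sums cnj X"
    using sums_X by (simp only: sums_cnj)
  then have "(\<lambda>k. cnj (\<beta> k) * cis (- fpq_freq q k * s)) sums cnj X"
    by (simp add: cis_cnj)
  then have second: "trig_series (\<lambda>k. cnj (\<beta> k) / 2) (\<lambda>k. - fpq_freq q k - l) s = cnj X * (cis (- l * s) / 2)"
    by (rule trig_series_half_shift)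
  have third: "trig_series (\<lambda>k. case k of 0 \<Rightarrow> - complex_of_real (Re (\<omega> * fpq p q t0))
                         | Suc 0 \<Rightarrow> - complex_of_real D / (2 * \<i>)
                         | Suc (Suc 0) \<Rightarrow> complex_of_real D / (2 * \<i>) | _ \<Rightarrow> 0)
          (\<lambda>k. case k of 0 \<Rightarrow> - l | Suc 0 \<Rightarrow> 1 - l | _ \<Rightarrow> - 1 - l) s
      = - complex_of_real (Re (\<omega> * fpq p q t0)) * cis (- l * s)
        - complex_of_real D / (2 * \<i>) * cis ((1 - l) * s) + complex_of_real D / (2 * \<i>) * cis ((- 1 - l) * s)"
    unfolding trig_series_def
    by (subst suminf_finite[of "{..<3}"]) (auto simp: numeral_3_eq_3 split: nat.split)
  have "complex_of_real (Re X) = (X + cnj X) / 2"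
    by (simp add: complex_add_cnj)
  then show ?thesis
    unfolding first second third X_def[symmetric]
    by (simp add: sin_eq_cis field_simps cis_mult)
qed

lemma fpq_coeff_le_remainder_bound:
  assumes p: "p > 1" and q: "q \<ge> p + 1" and \<omega>: "norm \<omega> = 1"
    and n: "n > 0" "16 * (\<bar>Re (\<omega> * fpq p q t0)\<bar> + \<bar>D\<bar>) \<le> real (Suc n)"
    and bound: "\<And>s. s \<in> {0..real (avg_count p) * avg_width p q n} \<Longrightarrow>
       \<bar>Re (\<omega> * fpq p q (t0 + s)) - Re (\<omega> * fpq p q t0) - D * sin s\<bar> \<le> B"
  shows "fpq_coeff p n \<le> 4 * B"
proof -
  define l where "l = fpq_freq q n"
  define w where "w = avg_width p q n"
  define m where "m = avg_count p"
  define g where "g = Re (\<omega> * fpq p q t0)"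
  define \<beta> where "\<beta> k = \<omega> * complex_of_real (fpq_coeff p k) * cis (fpq_freq q k * t0)" for k
  define c where
    "c k = (case k of 0 \<Rightarrow> - complex_of_real g | Suc 0 \<Rightarrow> - complex_of_real D / (2 * \<i>)
                    | Suc (Suc 0) \<Rightarrow> complex_of_real D / (2 * \<i>) | _ \<Rightarrow> 0)" for k
  define \<mu> where "\<mu> k = (case k of 0 \<Rightarrow> - l | Suc 0 \<Rightarrow> 1 - l | _ \<Rightarrow> - 1 - l)" for k
  have norm_\<beta>: "norm (\<beta> k) = fpq_coeff p k" for k
    using \<omega> by (simp add: \<beta>_def norm_mult abs_of_pos[OF fpq_coeff_pos])
  have "norm (\<beta> n / 2) \<le> B
      + (\<Sum>k. if k = n then 0 else norm (\<beta> k / 2) * norm (avg_factor ((fpq_freq q k - l) * w)) ^ m)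
      + (\<Sum>k. norm (cnj (\<beta> k) / 2) * norm (avg_factor ((- fpq_freq q k - l) * w)) ^ m)
      + (\<Sum>k. norm (c k) * norm (avg_factor (\<mu> k * w)) ^ m)"
  proof (rule norm_zero_freq_coeff_le_three)
    show "summable (\<lambda>k. norm (\<beta> k / 2))" "summable (\<lambda>k. norm (cnj (\<beta> k) / 2))"
      using summable_fpq_coeff[OF p] by (simp_all add: norm_divide norm_\<beta> summable_divide)
    show "summable (\<lambda>k. norm (c k))"
      by (rule summable_finite[of "{..<3}"]) (auto simp: c_def numeral_3_eq_3 split: nat.split)
    show "w > 0" "fpq_freq q n - l = 0"
      using avg_width_pos[OF p] by (simp_all add: w_def l_def)
  next
    fix u assume "u \<in> {0..real m * w}"
    moreover have "trig_series (\<lambda>k. \<beta> k / 2) (\<lambda>k. fpq_freq q k - l) u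
        + trig_series (\<lambda>k. cnj (\<beta> k) / 2) (\<lambda>k. - fpq_freq q k - l) u + trig_series c \<mu> u
        = complex_of_real (Re (\<omega> * fpq p q (t0 + u)) - Re (\<omega> * fpq p q t0) - D * sin u) * cis (- l * u)"
      unfolding \<beta>_def c_def[abs_def] \<mu>_def[abs_def] g_def
      by (rule remainder_times_cis_eq[OF p, symmetric])
    ultimately show "norm (trig_series (\<lambda>k. \<beta> k / 2) (\<lambda>k. fpq_freq q k - l) u
        + trig_series (\<lambda>k. cnj (\<beta> k) / 2) (\<lambda>k. - fpq_freq q k - l) u + trig_series c \<mu> u) \<le> B"
      using bound by (simp only: norm_mult norm_cis norm_of_real mult_1_right m_def w_def)
  qed
  also have "(\<Sum>k. norm (c k) * norm (avg_factor (\<mu> k * w)) ^ m)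
      = \<bar>g\<bar> * norm (avg_factor (- l * w)) ^ m + \<bar>D\<bar> / 2 * norm (avg_factor ((1 - l) * w)) ^ m
         + \<bar>D\<bar> / 2 * norm (avg_factor ((- 1 - l) * w)) ^ m"
    by (subst suminf_finite[of "{..<3}"])
       (auto simp: c_def \<mu>_def numeral_3_eq_3 norm_divide norm_mult split: nat.split)
  also have "\<dots> \<le> fpq_coeff p n / 16"
    unfolding l_def w_def m_def g_def by (rule low_freq_terms_le[OF p q n])
  also have "(\<Sum>k. if k = n then 0 else norm (\<beta> k / 2) * norm (avg_factor ((fpq_freq q k - l) * w)) ^ m)
      \<le> fpq_coeff p n / 32"
    using near_tail_le[OF p q, of n] by (simp add: norm_divide norm_\<beta> l_def w_def m_def cong: if_cong)
  also have "(\<Sum>k. norm (cnj (\<beta> k) / 2) * norm (avg_factor ((- fpq_freq q k - l) * w)) ^ m)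
      \<le> fpq_coeff p n / 16"
    using far_tail_le[OF p q, of n] by (simp add: norm_divide norm_\<beta> l_def w_def m_def)
  finally show ?thesis
    using fpq_coeff_pos[of p n] by (simp add: norm_divide norm_\<beta>)
qed

lemma tendsto_Suc_powr_0: "r < 0 \<Longrightarrow> (\<lambda>n. real (Suc n) powr r) \<longlonglongrightarrow> 0"
  by (intro tendsto_neg_powr filterlim_compose[OF filterlim_real_sequentially filterlim_Suc])

lemma avg_width_tendsto_0: "q > 1 \<Longrightarrow> avg_width p q \<longlonglongrightarrow> 0"
  unfolding avg_width_def[abs_def]
  using tendsto_mult_right_zero[OF tendsto_Suc_powr_0[of "1 - q"]] by simp

lemma avg_width_div_fpq_coeff:
  "avg_width p q n / fpq_coeff p n = avg_const p * real (Suc n) powr (p + 1 - q)"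
  by (simp add: avg_width_def fpq_coeff_def powr_minus_divide powr_add[symmetric] field_simps)

lemma eventually_fpq_coeff_le_avg_width:
  assumes p: "p > 1" and q: "q \<ge> p + 1" and \<omega>: "norm \<omega> = 1" and "\<delta> > 0" "K \<ge> 0"
    and small: "\<And>s. 0 \<le> s \<Longrightarrow> s < \<delta> \<Longrightarrow>
       \<bar>Re (\<omega> * fpq p q (t + s)) - Re (\<omega> * fpq p q t) - D * sin s\<bar> \<le> K * s"
  shows "eventually (\<lambda>n. fpq_coeff p n \<le> 4 * K * real (avg_count p) * avg_width p q n) sequentially"
proof -
  let ?m = "real (avg_count p)"
  have "(\<lambda>n. ?m * avg_width p q n) \<longlonglongrightarrow> 0"
    using tendsto_mult_right_zero[OF avg_width_tendsto_0] p q by simp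
  then have "eventually (\<lambda>n. ?m * avg_width p q n < \<delta>) sequentially"
    using \<open>\<delta> > 0\<close> by (rule order_tendstoD)
  moreover have "eventually (\<lambda>n. n > 0 \<and> 16 * (\<bar>Re (\<omega> * fpq p q t)\<bar> + \<bar>D\<bar>) \<le> real (Suc n)) sequentially"
    by (rule eventually_sequentiallyI[of "nat \<lceil>16 * (\<bar>Re (\<omega> * fpq p q t)\<bar> + \<bar>D\<bar>)\<rceil> + 1"]) linarith
  ultimately show ?thesis
  proof eventually_elim
    case (elim n)
    have "fpq_coeff p n \<le> 4 * (K * (?m * avg_width p q n))"
    proof (rule fpq_coeff_le_remainder_bound[OF p q \<omega>])
      fix s assume "s \<in> {0..?m * avg_width p q n}"
      then show "\<bar>Re (\<omega> * fpq p q (t + s)) - Re (\<omega> * fpq p q t) - D * sin s\<bar> \<le> K * (?m * avg_width p q n)"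
        using elim small[of s] \<open>K \<ge> 0\<close> by (auto intro: order_trans mult_left_mono)
    qed (use elim in auto)
    then show ?case by (simp add: mult_ac)
  qed
qed

lemma avg_width_le_fpq_coeff:
  assumes "p > 1" "q \<ge> p + 1"
  shows "avg_width p q n \<le> avg_const p * fpq_coeff p n"
proof -
  have "real (Suc n) powr (p + 1 - q) \<le> 1"
    using powr_mono[of "p + 1 - q" 0 "real (Suc n)"] assms by simp
  then have "avg_width p q n / fpq_coeff p n \<le> avg_const p"
    using avg_const_ge_4[OF assms(1)] by (simp add: avg_width_div_fpq_coeff mult_left_le)
  then show ?thesis
    using fpq_coeff_pos[of p n] by (simp add: divide_le_eq mult.commute)
qed

text \<open>Subtracting D * sin s rather than D * s keeps the remainder a trigonometric series.\<close>
lemma has_real_derivative_sin_remainder_le: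
  fixes g :: "real \<Rightarrow> real"
  assumes "(g has_real_derivative D) (at t0)" "e > 0"
  obtains d where "d > 0" "\<And>s. 0 \<le> s \<Longrightarrow> s < d \<Longrightarrow> \<bar>g (t0 + s) - g t0 - D * sin s\<bar> \<le> e * s"
proof -
  have "((\<lambda>s. g (s + t0)) has_real_derivative D) (at 0)"
    using DERIV_shift[of g D 0 t0] assms(1) by simp
  then have "((\<lambda>s. g (t0 + s) - g t0 - D * sin s) has_real_derivative D - 0 - D * cos 0) (at 0)"
    by (intro DERIV_diff DERIV_const DERIV_cmult DERIV_sin) (simp add: add.commute)
  then have "((\<lambda>s. g (t0 + s) - g t0 - D * sin s) has_derivative (*) 0) (at 0)"
    by (simp add: has_field_derivative_def)
  then obtain d where "d > 0" and small: "\<forall>s. \<bar>s\<bar> < d \<longrightarrow> \<bar>g (t0 + s) - g t0 - D * sin s\<bar> \<le> e * \<bar>s\<bar>"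
    using assms(2) unfolding has_derivative_at_alt by auto
  moreover have "\<bar>g (t0 + s) - g t0 - D * sin s\<bar> \<le> e * s" if "0 \<le> s" "s < d" for s
    using small that by (metis abs_of_nonneg)
  ultimately show ?thesis
    using that by blast
qed

lemma not_differentiable_Re_fpq:
  assumes p: "p > 1" and q: "q \<ge> p + 1" and \<omega>: "norm \<omega> = 1"
  shows "\<not> (\<lambda>s. Re (\<omega> * fpq p q s)) differentiable (at t0)"
proof
  let ?m = "real (avg_count p)" and ?M = "avg_const p"
  define e where "e = 1 / (8 * ?m * ?M)"
  have e: "e > 0"
    using avg_const_ge_4[OF p] avg_count_pos[of p] by (simp add: e_def)
  assume "(\<lambda>s. Re (\<omega> * fpq p q s)) differentiable (at t0)"
  then obtain D where "((\<lambda>s. Re (\<omega> * fpq p q s)) has_real_derivative D) (at t0)"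
    by (auto simp: real_differentiable_def)
  then obtain d where "d > 0" and "\<And>s. 0 \<le> s \<Longrightarrow> s < d \<Longrightarrow>
      \<bar>Re (\<omega> * fpq p q (t0 + s)) - Re (\<omega> * fpq p q t0) - D * sin s\<bar> \<le> e * s"
    using has_real_derivative_sin_remainder_le[OF _ e] by blast
  then have "eventually (\<lambda>n. fpq_coeff p n \<le> 4 * e * ?m * avg_width p q n) sequentially"
    using e by (intro eventually_fpq_coeff_le_avg_width[OF p q \<omega>, where \<delta> = d]) auto
  moreover have "4 * e * ?m * avg_width p q n \<le> fpq_coeff p n / 2" for n
    using mult_left_mono[OF avg_width_le_fpq_coeff[OF p q, of n], of "4 * e * ?m"] e
      avg_const_ge_4[OF p] avg_count_pos[of p] by (simp add: e_def)
  ultimately have "eventually (\<lambda>n. fpq_coeff p n \<le> fpq_coeff p n / 2) sequentially"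
    by (metis (lifting) eventually_mono order_trans)
  then show False
    using fpq_coeff_pos[of p] by (simp add: eventually_False_sequentially)
qed

lemma not_lipschitz_at_Re_fpq:
  assumes p: "p > 1" and q: "q > p + 1" and \<omega>: "norm \<omega> = 1"
  shows "\<not> lipschitz_at (\<lambda>s. Re (\<omega> * fpq p q s)) t0"
proof
  let ?m = "real (avg_count p)"
  assume "lipschitz_at (\<lambda>s. Re (\<omega> * fpq p q s)) t0"
  then obtain L \<eta> where "L > 0" "\<eta> > 0"
    and lip: "\<And>t. t0 - \<eta> < t \<Longrightarrow> t < t0 + \<eta> \<Longrightarrow>
       \<bar>Re (\<omega> * fpq p q t) - Re (\<omega> * fpq p q t0)\<bar> \<le> L * \<bar>t - t0\<bar>"
    unfolding lipschitz_at_def by auto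
  have "\<bar>Re (\<omega> * fpq p q (t0 + s)) - Re (\<omega> * fpq p q t0) - 0 * sin s\<bar> \<le> L * s"
    if "0 \<le> s" "s < \<eta>" for s
    using lip[of "t0 + s"] that by simp
  then have "eventually (\<lambda>n. fpq_coeff p n \<le> 4 * L * ?m * avg_width p q n) sequentially"
    using \<open>L > 0\<close> \<open>\<eta> > 0\<close> q
    by (intro eventually_fpq_coeff_le_avg_width[OF p _ \<omega>, where D = 0 and \<delta> = \<eta>]) auto
  moreover have "(\<lambda>n. 4 * L * ?m * (avg_width p q n / fpq_coeff p n)) \<longlonglongrightarrow> 0"
    unfolding avg_width_div_fpq_coeff
    using q by (intro tendsto_mult_right_zero tendsto_Suc_powr_0) simp
  then have "eventually (\<lambda>n. 4 * L * ?m * (avg_width p q n / fpq_coeff p n) < 1) sequentially"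
    by (rule order_tendstoD) simp
  ultimately have "eventually (\<lambda>n. False) sequentially"
  proof eventually_elim
    case (elim n)
    then show False
      using fpq_coeff_pos[of p n] by (simp add: field_simps)
  qed
  then show False by simp
qed

lemma continuous_on_fpq: "p > 1 \<Longrightarrow> continuous_on S (fpq p q)"
  unfolding fpq_eq_trig_series by (intro continuous_on_trig_series summable_norm_fpq_coeff)

lemma differentiable_Re: "f differentiable F \<Longrightarrow> (\<lambda>x. Re (f x)) differentiable F"
  unfolding differentiable_def by (auto intro: has_derivative_Re)

lemma lipschitz_at_Re:
  assumes "lipschitz_at g t"
  shows "lipschitz_at (\<lambda>s. Re (g s)) t"
proof -
  have "norm (Re (g s) - Re (g t)) \<le> norm (g s - g t)" for s
    using abs_Re_le_cmod[of "g s - g t"] by simp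
  with assms show ?thesis
    unfolding lipschitz_at_def by (meson order_trans)
qed

theorem mainTheorem8:
  fixes p q :: real
  assumes "p > 1" and "q \<ge> p + 1"
  shows "continuous_on UNIV (fpq p q)
       \<and> continuous_on UNIV (\<lambda>t. Re (fpq p q t))
       \<and> continuous_on UNIV (\<lambda>t. Im (fpq p q t))
       \<and> (\<forall>t. \<not> (fpq p q) differentiable (at t))
       \<and> (\<forall>t. \<not> (\<lambda>s. Re (fpq p q s)) differentiable (at t))
       \<and> (\<forall>t. \<not> (\<lambda>s. Im (fpq p q s)) differentiable (at t))
       \<and> (q > p + 1 \<longrightarrow>
            (\<forall>t. \<not> lipschitz_at (fpq p q) t
               \<and> \<not> lipschitz_at (\<lambda>s. Re (fpq p q s)) t
               \<and> \<not> lipschitz_at (\<lambda>s. Im (fpq p q s)) t))"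
proof -
  have Re_eq: "(\<lambda>s. Re (fpq p q s)) = (\<lambda>s. Re (1 * fpq p q s))"
    and Im_eq: "(\<lambda>s. Im (fpq p q s)) = (\<lambda>s. Re (- \<i> * fpq p q s))"
    by simp_all
  have cont: "continuous_on UNIV (fpq p q)"
    using assms(1) by (rule continuous_on_fpq)
  have "\<not> (\<lambda>s. Re (fpq p q s)) differentiable (at t)" "\<not> (\<lambda>s. Im (fpq p q s)) differentiable (at t)" for t
    unfolding Re_eq Im_eq by (intro not_differentiable_Re_fpq assms; simp)+
  moreover have "\<not> lipschitz_at (\<lambda>s. Re (fpq p q s)) t" "\<not> lipschitz_at (\<lambda>s. Im (fpq p q s)) t"
    if "q > p + 1" for t
    unfolding Re_eq Im_eq by (intro not_lipschitz_at_Re_fpq assms(1) that; simp)+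
  ultimately show ?thesis
    using cont continuous_on_Re[OF cont] continuous_on_Im[OF cont] differentiable_Re lipschitz_at_Re
    by blast
qed

end
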